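(* Let $0\le m<n$ and $\lambda\in\mathcal P_m$. For every highest weight vertex $b=x_1\otimes\cdots\otimes x_m$ of weight $\lambda$ of the $C_n$-crystal $(B_1^{C_n})^{\otimes m}$, $$\overline D(b)=\widetilde D(b)+\frac{m-|\lambda|}{2}.$$
   Context: $B_1^{C_n}$ has vertices $1,\dots,n,\overline n,\dots,\overline1$ with weights $\mathrm{wt}(i)=\varepsilon_i$, $\mathrm{wt}(\overline i)=-\varepsilon_i$ and arrows $i\xrightarrow{i}i+1$, $\overline{i+1}\xrightarrow{i}\overline i$ ($1\le i<n$), $n\xrightarrow{n}\overline n$. Tensor rule: $\tilde f_i(b\otimes b')=\tilde f_ib\otimes b'$ if $\varphi_i(b)>\varepsilon_i(b')$, else $b\otimes\tilde f_ib'$; $\tilde e_i(b\otimes b')=\tilde e_ib\otimes b'$ if $\varphi_i(b)\ge\varepsilon_i(b')$, else $b\otimes\tilde e_ib'$. Highest weight means $\varepsilon_i(b)=0$ for $1\le i\le n$; $\lambda\in\mathcal P_m$ (partition with at most $m$ parts) is identified with $\sum\lambda_i\varepsilon_i$ and $|\lambda|=\sum\lambda_i$. Two orders on the letters: $\le^C$: $1<2<\cdots<n<\overline n<\cdots<\overline2<\overline1$ (total); $\le^D$: $\overline n<\cdots<\overline2<\{1,\overline1\}<2<\cdots<n$, where $1$ and $\overline1$ are incomparable and each lies above $\overline2$ and below $2$. Define $\overline H(x\otimes y)=0$ if $x\ge^C y$, $=2$ if $(x,y)=(1,\overline1)$, and $=1$ otherwise; define $\widetilde H(x\otimes y)=0$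 if $x\ge^D y$, $=2$ if $(x,y)=(\overline n,n)$, and $=1$ otherwise (so e.g. $\widetilde H(1\otimes\overline1)=\widetilde H(\overline1\otimes1)=1$). Then $\overline D(b)=\sum_{i=1}^{m-1}(m-i)\overline H(x_i\otimes x_{i+1})$ and $\widetilde D(b)=\sum_{i=1}^{m-1}(m-i)\widetilde H(x_i\otimes x_{i+1})$. *)

theory Defs
  imports Main "HOL.Real"
begin

text \<open>Letters of the crystal B_1^{C_n}: Unb i stands for i, Bar i for the barred letter.\<close>
datatype letter = Unb nat | Bar nat

definition valid_letter :: "nat \<Rightarrow> letter \<Rightarrow> bool" where
  "valid_letter n x = (case x of Unb i \<Rightarrow> 1 \<le> i \<and> i \<le> n | Bar i \<Rightarrow> 1 \<le> i \<and> i \<le> n)"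

fun f_letter :: "nat \<Rightarrow> nat \<Rightarrow> letter \<Rightarrow> letter option" where
  "f_letter n i (Unb j) =
     (if 1 \<le> i \<and> i < n \<and> j = i then Some (Unb (i+1))
      else if i = n \<and> j = n then Some (Bar n) else None)"
| "f_letter n i (Bar j) =
     (if 1 \<le> i \<and> i < n \<and> j = i + 1 then Some (Bar i) else None)"

definition phi_letter :: "nat \<Rightarrow> nat \<Rightarrow> letter \<Rightarrow> int" where
  "phi_letter n i x = (if f_letter n i x \<noteq> None then 1 else 0)"

definition eps_letter :: "nat \<Rightarrow> nat \<Rightarrow> letter \<Rightarrow> int" where
  "eps_letter n i x = (if \<exists>y. f_letter n i y = Some x then 1 else 0)"

text \<open>epsilon_i and phi_i on the tensor product x_1 \<otimes> (x_2 \<otimes> ... ), induced by the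
  tensor rule (Kashiwara convention) given in the paper.\<close>
fun eps_tensor :: "nat \<Rightarrow> nat \<Rightarrow> letter list \<Rightarrow> int"
and phi_tensor :: "nat \<Rightarrow> nat \<Rightarrow> letter list \<Rightarrow> int" where
  "eps_tensor n i [] = 0"
| "eps_tensor n i (x # r) =
     max (eps_letter n i x) (eps_tensor n i r + eps_letter n i x - phi_letter n i x)"
| "phi_tensor n i [] = 0"
| "phi_tensor n i (x # r) =
     max (phi_tensor n i r) (phi_letter n i x + phi_tensor n i r - eps_tensor n i r)"

definition highest_weight :: "nat \<Rightarrow> letter list \<Rightarrow> bool" where
  "highest_weight n b = (\<forall>i\<in>{1..n}. eps_tensor n i b = 0)"

text \<open>Weight, as coefficient function on the basis epsilon_1,...,epsilon_n.\<close>
definition wt_letter :: "letter \<Rightarrow> nat \<Rightarrow> int" where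
  "wt_letter x k = (case x of Unb j \<Rightarrow> (if j = k then 1 else 0)
                             | Bar j \<Rightarrow> (if j = k then -1 else 0))"

definition wt :: "letter list \<Rightarrow> nat \<Rightarrow> int" where
  "wt b k = (\<Sum>x\<leftarrow>b. wt_letter x k)"

text \<open>Order C: 1 < 2 < ... < n < bar n < ... < bar 1.\<close>
definition rankC :: "nat \<Rightarrow> letter \<Rightarrow> int" where
  "rankC n x = (case x of Unb i \<Rightarrow> int i | Bar i \<Rightarrow> 2 * int n + 1 - int i)"

definition leC :: "nat \<Rightarrow> letter \<Rightarrow> letter \<Rightarrow> bool" where
  "leC n x y = (rankC n x \<le> rankC n y)"

text \<open>Order D: bar n < ... < bar 2 < {1, bar 1} < 2 < ... < n, with 1 and bar 1 incomparable.\<close>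
definition rankD :: "letter \<Rightarrow> int" where
  "rankD x = (case x of Unb i \<Rightarrow> (if i = 1 then 0 else int i)
                      | Bar i \<Rightarrow> (if i = 1 then 0 else - int i))"

definition leD :: "letter \<Rightarrow> letter \<Rightarrow> bool" where
  "leD x y = (x = y \<or> rankD x < rankD y)"

definition Hbar :: "nat \<Rightarrow> letter \<Rightarrow> letter \<Rightarrow> nat" where
  "Hbar n x y = (if leC n y x then 0 else if x = Unb 1 \<and> y = Bar 1 then 2 else 1)"

definition Htilde :: "nat \<Rightarrow> letter \<Rightarrow> letter \<Rightarrow> nat" where
  "Htilde n x y = (if leD y x then 0 else if x = Bar n \<and> y = Unb n then 2 else 1)"

text \<open>Energies; list index k corresponds to x_{k+1}.\<close>
definition Dbar :: "nat \<Rightarrow> letter list \<Rightarrow> nat" where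
  "Dbar n b = (let m = length b in
     \<Sum>k<m - 1. (m - (k + 1)) * Hbar n (b ! k) (b ! (k + 1)))"

definition Dtilde :: "nat \<Rightarrow> letter list \<Rightarrow> nat" where
  "Dtilde n b = (let m = length b in
     \<Sum>k<m - 1. (m - (k + 1)) * Htilde n (b ! k) (b ! (k + 1)))"

text \<open>lam : partition with at most m parts, parts lam 1, ..., lam m (index 0 unused).\<close>
definition partition_le :: "nat \<Rightarrow> (nat \<Rightarrow> nat) \<Rightarrow> bool" where
  "partition_le m lam = ((\<forall>i. 1 \<le> i \<longrightarrow> lam (Suc i) \<le> lam i) \<and> (\<forall>i>m. lam i = 0))"

end

theory Submission
  imports Defs
begin

(* Let beta(b) be the number of barred letters of b. Summing the weight over 1..n gives
   |lambda| = m - 2 beta(b). For x <> bar n a case check gives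
   Hbar(x,y) - Htilde(x,y) = [y is barred] - [x is barred], so the weighted sum Dbar - Dtilde
   telescopes to beta(b) - m [x_1 is barred].
   For a highest weight vertex the tensor rule gives <wt(x_1 ... x_(k-1)), alpha_i> >= eps_i(x_k)
   for all k and i. Hence x_1 is unbarred, and if some x_k = bar n then the weight of the prefix
   before it dominates eps_1 + ... + eps_n, which needs at least n letters, impossible as m < n.
   So Dbar - Dtilde = beta(b) = (m - |lambda|)/2. *)

fun is_bar :: "letter \<Rightarrow> bool" where
  "is_bar (Unb _) = False"
| "is_bar (Bar _) = True"

lemma eps_letter_eq:
  assumes "1 \<le> i" "i \<le> n"
  shows "eps_letter n i x =
    of_bool (x = (if i < n then Unb (Suc i) else Bar n) \<or> (i < n \<and> x = Bar i))"
proof -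
  have "(\<exists>y. f_letter n i y = Some x) \<longleftrightarrow>
      x = (if i < n then Unb (Suc i) else Bar n) \<or> (i < n \<and> x = Bar i)" (is "_ \<longleftrightarrow> ?target")
  proof
    assume "\<exists>y. f_letter n i y = Some x"
    then obtain y where "f_letter n i y = Some x" by blast
    then show ?target
      by (cases y) (auto split: if_splits)
  next
    assume ?target
    then have "f_letter n i (Unb i) = Some x \<or> f_letter n i (Bar (Suc i)) = Some x"
      using assms by (auto split: if_splits)
    then show "\<exists>y. f_letter n i y = Some x" by blast
  qed
  then show ?thesis by (simp add: eps_letter_def)
qed

lemma eps_letter_Bar_self:
  assumes "1 \<le> i" "i \<le> n"
  shows "eps_letter n i (Bar i) = 1"
  using assms by (simp add: eps_letter_eq)

(* Since wt_letter x (Suc n) = 0, the arrow n --> bar n needs no separate treatment. *)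
lemma phi_minus_eps_letter:
  assumes "valid_letter n x" "1 \<le> i" "i \<le> n"
  shows "phi_letter n i x - eps_letter n i x = wt_letter x i - wt_letter x (Suc i)"
  using assms
  by (cases x) (auto simp: phi_letter_def eps_letter_eq wt_letter_def valid_letter_def)

lemma eps_letter_nonneg: "0 \<le> eps_letter n i x"
  by (simp add: eps_letter_def)

lemma wt_Nil [simp]: "wt [] k = 0"
  by (simp add: wt_def)

lemma wt_Cons [simp]: "wt (x # l) k = wt_letter x k + wt l k"
  by (simp add: wt_def)

lemma wt_beyond_rank:
  assumes "\<forall>x\<in>set l. valid_letter n x" "n < k"
  shows "wt l k = 0"
  using assms by (induction l) (auto simp: wt_letter_def valid_letter_def split: letter.splits)

lemma sum_list_phi_minus_eps:
  assumes "\<forall>x\<in>set l. valid_letter n x" "1 \<le> i" "i \<le> n"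
  shows "(\<Sum>x\<leftarrow>l. phi_letter n i x - eps_letter n i x) = wt l i - wt l (Suc i)"
  using assms by (induction l) (simp_all add: phi_minus_eps_letter)

lemma sum_wt_eq:
  assumes "\<forall>x\<in>set l. valid_letter n x"
  shows "(\<Sum>k=1..n. wt l k) = int (length l) - 2 * (\<Sum>x\<leftarrow>l. of_bool (is_bar x))"
  using assms
proof (induction l)
  case Nil
  then show ?case by simp
next
  case (Cons x l)
  have "(\<Sum>k=1..n. wt_letter x k) = 1 - 2 * of_bool (is_bar x)"
    using Cons.prems by (cases x) (auto simp: wt_letter_def valid_letter_def)
  with Cons show ?case by (simp add: sum.distrib)
qed

lemma eps_tensor_ge_prefix:
  assumes "k < length b"
  shows "(\<Sum>x\<leftarrow>take k b. eps_letter n i x - phi_letter n i x) + eps_letter n i (b ! k)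
    \<le> eps_tensor n i b"
  using assms
proof (induction b arbitrary: k)
  case Nil
  then show ?case by simp
next
  case (Cons x b)
  then show ?case by (cases k) fastforce+
qed

lemma highest_weight_prefix_wt:
  assumes "highest_weight n b" "\<forall>x\<in>set b. valid_letter n x"
    and "k < length b" "1 \<le> i" "i \<le> n"
  shows "wt (take k b) (Suc i) + eps_letter n i (b ! k) \<le> wt (take k b) i"
proof -
  have "\<forall>x\<in>set (take k b). valid_letter n x"
    using assms(2) by (meson in_set_takeD)
  moreover have "eps_tensor n i b = 0"
    using assms(1,4,5) by (simp add: highest_weight_def)
  ultimately show ?thesis
    using eps_tensor_ge_prefix[OF assms(3), of n i] sum_list_phi_minus_eps[of "take k b" n i]
      assms(4,5)
    by (simp add: sum_list_subtractf)
qed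

lemma highest_weight_hd_unbarred:
  assumes "highest_weight n b" "\<forall>x\<in>set b. valid_letter n x" "b \<noteq> []"
  shows "\<not> is_bar (hd b)"
proof
  assume "is_bar (hd b)"
  then obtain i where i: "hd b = Bar i" by (cases "hd b") auto
  with assms(2,3) have "valid_letter n (Bar i)"
    by (metis hd_in_set)
  then have "1 \<le> i" "i \<le> n"
    by (simp_all add: valid_letter_def)
  then show False
    using highest_weight_prefix_wt[OF assms(1,2), of 0 i] eps_letter_Bar_self[of i n] assms(3) i
    by (simp add: hd_conv_nth)
qed

lemma highest_weight_Bar_rank_notin:
  assumes hw: "highest_weight n b" and valid: "\<forall>x\<in>set b. valid_letter n x"
    and short: "length b < n"
  shows "Bar n \<notin> set b"
proof
  assume "Bar n \<in> set b"
  then obtain k where k: "k < length b" "b ! k = Bar n"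
    by (auto simp: in_set_conv_nth)
  define l where "l = take k b"
  have valid_l: "\<forall>x\<in>set l. valid_letter n x"
    using valid unfolding l_def by (meson in_set_takeD)
  have "1 \<le> n"
    using k short by simp
  then have top: "1 \<le> wt l n"
    using highest_weight_prefix_wt[OF hw valid k(1), of n] eps_letter_Bar_self[of n n]
      wt_beyond_rank[OF valid_l, of "Suc n"] k(2)
    unfolding l_def by simp
  have step: "wt l (Suc i) \<le> wt l i" if "1 \<le> i" "i \<le> n" for i
    using highest_weight_prefix_wt[OF hw valid k(1) that] eps_letter_nonneg[of n i "b ! k"]
    unfolding l_def by linarith
  have "1 \<le> wt l i" if "1 \<le> i" "i \<le> n" for i
  proof -
    have "wt l n \<le> wt l i"
    proof (rule lift_Suc_antimono_le_ivl[where N = "{1..<n}"])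
      show "wt l (Suc j) \<le> wt l j" if "j \<in> {1..<n}" for j
        using step that by simp
    qed (use that in auto)
    with top show ?thesis by simp
  qed
  then have "(\<Sum>i=1..n. 1) \<le> (\<Sum>i=1..n. wt l i)"
    by (intro sum_mono) simp
  also have "\<dots> \<le> int (length l)"
  proof -
    have "0 \<le> (\<Sum>x\<leftarrow>l. of_bool (is_bar x) :: int)"
      by (rule sum_list_nonneg) auto
    then show ?thesis
      using sum_wt_eq[OF valid_l] by simp
  qed
  finally show False
    using k short by (simp add: l_def)
qed

lemma Hbar_minus_Htilde:
  assumes "valid_letter n x" "valid_letter n y" "x \<noteq> Bar n"
  shows "int (Hbar n x y) - int (Htilde n x y) = of_bool (is_bar y) - of_bool (is_bar x)"
  using assms
  by (cases x; cases y)
    (auto simp: Hbar_def Htilde_def leC_def leD_def rankC_def rankD_def valid_letter_def)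

lemma sum_weighted_differences:
  fixes s :: "nat \<Rightarrow> 'a::comm_ring_1"
  shows "(\<Sum>k<m. of_nat (m - k) * (s (Suc k) - s k)) =
    (\<Sum>k\<le>m. s k) - of_nat (Suc m) * s 0"
proof (induction m)
  case 0
  then show ?case by simp
next
  case (Suc m)
  have "(\<Sum>k<Suc m. of_nat (Suc m - k) * (s (Suc k) - s k))
      = (\<Sum>k<Suc m. of_nat (m - k) * (s (Suc k) - s k) + (s (Suc k) - s k))"
    by (intro sum.cong refl) (simp add: Suc_diff_le distrib_right)
  also have "\<dots> = (\<Sum>k<m. of_nat (m - k) * (s (Suc k) - s k)) + (s (Suc m) - s 0)"
    by (simp add: sum.distrib sum_lessThan_telescope)
  also have "\<dots> = (\<Sum>k\<le>m. s k) - of_nat (Suc m) * s 0 + (s (Suc m) - s 0)"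
    by (simp only: Suc.IH)
  also have "\<dots> = (\<Sum>k\<le>Suc m. s k) - of_nat (Suc (Suc m)) * s 0"
    by (simp add: algebra_simps)
  finally show ?case .
qed

definition energy :: "(letter \<Rightarrow> letter \<Rightarrow> nat) \<Rightarrow> letter list \<Rightarrow> nat" where
  "energy H b = (let m = length b in \<Sum>k<m - 1. (m - (k + 1)) * H (b ! k) (b ! (k + 1)))"

lemma Dbar_eq_energy: "Dbar n = energy (Hbar n)"
  by (simp add: fun_eq_iff Dbar_def energy_def)

lemma Dtilde_eq_energy: "Dtilde n = energy (Htilde n)"
  by (simp add: fun_eq_iff Dtilde_def energy_def)

lemma energy_diff_telescope:
  assumes "\<And>x y. x \<in> set b \<Longrightarrow> y \<in> set b \<Longrightarrow>
      int (H x y) - int (H' x y) = s y - s x"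
    and "b \<noteq> []"
  shows "int (energy H b) - int (energy H' b) = (\<Sum>x\<leftarrow>b. s x) - int (length b) * s (hd b)"
proof -
  obtain m where m: "length b = Suc m"
    using assms(2) by (cases b) auto
  have "int (energy H b) - int (energy H' b)
      = (\<Sum>k<m. int (m - k) * (int (H (b ! k) (b ! Suc k)) - int (H' (b ! k) (b ! Suc k))))"
    by (simp add: energy_def m sum_subtractf[symmetric] algebra_simps)
  also have "\<dots> = (\<Sum>k<m. int (m - k) * (s (b ! Suc k) - s (b ! k)))"
    using m by (intro sum.cong refl) (simp add: assms(1))
  also have "\<dots> = (\<Sum>k\<le>m. s (b ! k)) - int (Suc m) * s (b ! 0)"
    by (rule sum_weighted_differences)
  also have "\<dots> = (\<Sum>x\<leftarrow>b. s x) - int (length b) * s (hd b)"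
    using m assms(2)
    by (simp add: sum_list_sum_nth atLeast0AtMost lessThan_Suc_atMost[symmetric]
        atLeast0LessThan hd_conv_nth)
  finally show ?thesis .
qed

lemma highest_weight_Dbar_minus_Dtilde:
  assumes hw: "highest_weight n b" and valid: "\<forall>x\<in>set b. valid_letter n x"
    and short: "length b < n"
  shows "int (Dbar n b) - int (Dtilde n b) = (\<Sum>x\<leftarrow>b. of_bool (is_bar x))"
proof (cases "b = []")
  case False
  have "Bar n \<notin> set b"
    using highest_weight_Bar_rank_notin[OF hw valid short] .
  then have "int (Hbar n x y) - int (Htilde n x y) = of_bool (is_bar y) - of_bool (is_bar x)"
    if "x \<in> set b" "y \<in> set b" for x y
    using that valid by (intro Hbar_minus_Htilde) auto
  then have "int (energy (Hbar n) b) - int (energy (Htilde n) b)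
      = (\<Sum>x\<leftarrow>b. of_bool (is_bar x)) - int (length b) * of_bool (is_bar (hd b))"
    by (rule energy_diff_telescope[OF _ False])
  then show ?thesis
    using highest_weight_hd_unbarred[OF hw valid False]
    by (simp add: Dbar_eq_energy Dtilde_eq_energy)
qed (simp add: Dbar_def Dtilde_def)

theorem proposition39:
  fixes n m :: nat and lam :: "nat \<Rightarrow> nat" and b :: "letter list"
  assumes "m < n"
    and "partition_le m lam"
    and "length b = m"
    and "\<forall>x\<in>set b. valid_letter n x"
    and "highest_weight n b"
    and "\<forall>k\<in>{1..n}. wt b k = int (lam k)"
  shows "real (Dbar n b) = real (Dtilde n b) + (real m - real (\<Sum>i=1..m. lam i)) / 2"
proof -
  have "(\<Sum>i=1..m. lam i) = (\<Sum>i=1..n. lam i)"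
    using assms(1,2) by (intro sum.mono_neutral_left) (auto simp: partition_le_def)
  then have "int (\<Sum>i=1..m. lam i) = int m - 2 * (\<Sum>x\<leftarrow>b. of_bool (is_bar x))"
    using sum_wt_eq[OF assms(4)] assms(3,6) by simp
  then have int_eq:
      "2 * (int (Dbar n b) - int (Dtilde n b)) = int m - int (\<Sum>i=1..m. lam i)"
    using highest_weight_Dbar_minus_Dtilde[OF assms(5,4)] assms(1,3) by simp
  have "2 * (real (Dbar n b) - real (Dtilde n b)) = real m - real (\<Sum>i=1..m. lam i)"
    using arg_cong[OF int_eq, of real_of_int] by simp
  then show ?thesis
    by (simp add: field_simps)
qed

end
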